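(* Suppose the family of update functions $\mathrm{Upd}$ satisfies P1, P3 and P4. Let $\mathcal{M}=(W,\mathcal{F})$ be a measure space, $\Pr\in\Delta_{\mathcal{M}}$, and $A\subseteq B$ with $A,B\in\mathcal{F}$. If $\Pr(A|B)=1$ (respectively $\Pr(A|B)=0$), then $\Pr'(A)=1$ (respectively $\Pr'(A)=0$) for all $\Pr'\in\mathrm{Upd}^{\mathcal{M}}(\Pr,B)$.
   Context: A measure space is a pair $\mathcal{M}=(W,\mathcal{F})$ with $\mathcal{F}$ an algebra of subsets of $W$; $\Delta_{\mathcal{M}}$ is the set of all probability measures on $\mathcal{M}$. An update function on $\mathcal{M}$ is a map $\mathrm{Upd}^{\mathcal{M}}:2^{\Delta_{\mathcal{M}}}\times\mathcal{F}\to 2^{\Delta_{\mathcal{M}}}$ such that $\mathrm{Upd}^{\mathcal{M}}(X,B)=\emptyset$ whenever $\Pr(B)=0$ for all $\Pr\in X$; $\mathrm{Upd}^{\mathcal{M}}(\Pr,B)$ means $\mathrm{Upd}^{\mathcal{M}}(\{\Pr\},B)$. A family $\mathrm{Upd}=\{\mathrm{Upd}^{\mathcal{M}}\}$ has one update function for each measure space. $\Pr(A|B)=\Pr(A\cap B)/\Pr(B)$. Postulates (for all $\mathcal{M}=(W,\mathcal{F})$, $X\subseteq\Delta_{\mathcal{M}}$, $B,C\in\mathcal{F}$): P1: $\mathrm{Upd}^{\mathcal{M}}(X,B)\subseteq\{\Pr\in\Delta_{\mathcal{M}}:\Pr(B)=1\}$. P3: $\mathrm{Upd}^{\mathcal{M}}(\mathrm{Upd}^{\mathcal{M}}(X,B),C)=\mathrm{Upd}^{\mathcal{M}}(X,B\cap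 C)$. P4: $\mathrm{Upd}^{\mathcal{M}}(X,B)=X$ if $\Pr(B)=1$ for all $\Pr\in X$. *)

theory Defs
  imports "HOL-Analysis.Analysis"
begin

text \<open>A measure space is a pair (W, F) with F an algebra of subsets of W (library locale algebra).
  A probability measure on it is a finitely additive function F to [0,1] with P W = 1;
  to make equality of measures meaningful it is normalised to 0 outside F.\<close>

definition prob_measure_on :: "'a set \<Rightarrow> 'a set set \<Rightarrow> ('a set \<Rightarrow> real) \<Rightarrow> bool" where
  "prob_measure_on W F P \<longleftrightarrow>
     (\<forall>S\<in>F. 0 \<le> P S) \<and> P W = 1 \<and>
     (\<forall>S T. S \<in> F \<longrightarrow> T \<in> F \<longrightarrow> S \<inter> T = {} \<longrightarrow> P (S \<union> T) = P S + P T) \<and>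
     (\<forall>S. S \<notin> F \<longrightarrow> P S = 0)"

definition Delta :: "'a set \<Rightarrow> 'a set set \<Rightarrow> ('a set \<Rightarrow> real) set" where
  "Delta W F = {P. prob_measure_on W F P}"

definition cond_prob :: "('a set \<Rightarrow> real) \<Rightarrow> 'a set \<Rightarrow> 'a set \<Rightarrow> real" where
  "cond_prob P A B = P (A \<inter> B) / P B"

type_synonym 'a upd_fun = "('a set \<Rightarrow> real) set \<Rightarrow> 'a set \<Rightarrow> ('a set \<Rightarrow> real) set"

definition update_fun :: "'a set \<Rightarrow> 'a set set \<Rightarrow> 'a upd_fun \<Rightarrow> bool" where
  "update_fun W F U \<longleftrightarrow>
     (\<forall>X B. X \<subseteq> Delta W F \<longrightarrow> B \<in> F \<longrightarrow>
        U X B \<subseteq> Delta W F \<and> ((\<forall>P\<in>X. P B = 0) \<longrightarrow> U X B = {}))"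

type_synonym 'a upd_family = "'a set \<Rightarrow> 'a set set \<Rightarrow> 'a upd_fun"

definition upd_family :: "'a upd_family \<Rightarrow> bool" where
  "upd_family Upd \<longleftrightarrow> (\<forall>W F. algebra W F \<longrightarrow> update_fun W F (Upd W F))"

definition P1 :: "'a upd_family \<Rightarrow> bool" where
  "P1 Upd \<longleftrightarrow> (\<forall>W F X B. algebra W F \<longrightarrow> X \<subseteq> Delta W F \<longrightarrow> B \<in> F \<longrightarrow>
      Upd W F X B \<subseteq> {P \<in> Delta W F. P B = 1})"

definition P3 :: "'a upd_family \<Rightarrow> bool" where
  "P3 Upd \<longleftrightarrow> (\<forall>W F X B C. algebra W F \<longrightarrow> X \<subseteq> Delta W F \<longrightarrow> B \<in> F \<longrightarrow> C \<in> F \<longrightarrow>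
      Upd W F (Upd W F X B) C = Upd W F X (B \<inter> C))"

definition P4 :: "'a upd_family \<Rightarrow> bool" where
  "P4 Upd \<longleftrightarrow> (\<forall>W F X B. algebra W F \<longrightarrow> X \<subseteq> Delta W F \<longrightarrow> B \<in> F \<longrightarrow>
      (\<forall>P\<in>X. P B = 1) \<longrightarrow> Upd W F X B = X)"

end

theory Submission
  imports Defs
begin

text \<open>By P4, updating on the complement of a null set N leaves P unchanged, so by P3
  updating on B is the same as updating on B - N. If P(A|B) = 1 then B - A is null and
  the update on B is an update on A, which gets probability 1 by P1; if P(A|B) = 0 with
  P(B) > 0 then A is null and the update is on B - A, which is disjoint from A.\<close>

lemma prob_measure_on_additive:
  assumes "prob_measure_on W F P" "S \<in> F" "T \<in> F" "S \<inter> T = {}"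
  shows "P (S \<union> T) = P S + P T"
  using assms unfolding prob_measure_on_def by blast

lemma (in algebra) prob_measure_on_Diff:
  assumes "prob_measure_on \<Omega> M P" "S \<in> M" "T \<in> M" "T \<subseteq> S"
  shows "P S = P T + P (S - T)"
proof -
  have "S = T \<union> (S - T)" using assms(4) by blast
  then show ?thesis
    using prob_measure_on_additive[OF assms(1,3)] assms(2,3) by (metis Diff Diff_disjoint)
qed

lemma (in algebra) prob_measure_on_compl:
  assumes "prob_measure_on \<Omega> M P" "S \<in> M"
  shows "P (\<Omega> - S) = 1 - P S"
  using prob_measure_on_Diff[OF assms(1) top assms(2) sets_into_space[OF assms(2)]] assms(1)
  by (simp add: prob_measure_on_def)

lemma (in algebra) prob_measure_on_le_1:
  assumes "prob_measure_on \<Omega> M P" "S \<in> M"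
  shows "P S \<le> 1"
proof -
  have "0 \<le> P (\<Omega> - S)" using assms(1) compl_sets[OF assms(2)] by (simp add: prob_measure_on_def)
  then show ?thesis using prob_measure_on_compl[OF assms] by simp
qed

lemma (in algebra) prob_measure_on_disjoint_certain:
  assumes "prob_measure_on \<Omega> M P" "S \<in> M" "T \<in> M" "S \<inter> T = {}" "P S = 1"
  shows "P T = 0"
proof -
  have "P (S \<union> T) = 1 + P T"
    using prob_measure_on_additive[OF assms(1-4)] assms(5) by simp
  moreover have "P (S \<union> T) \<le> 1" using prob_measure_on_le_1[OF assms(1)] assms(2,3) by blast
  moreover have "0 \<le> P T" using assms(1,3) by (simp add: prob_measure_on_def)
  ultimately show ?thesis by linarith
qed

lemma update_on_posterior_certain:
  assumes "P1 Upd" "algebra W F" "X \<subseteq> Delta W F" "B \<in> F" "Q \<in> Upd W F X B"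
  shows "prob_measure_on W F Q" "Q B = 1"
  using assms unfolding P1_def Delta_def by blast+

lemma update_remove_null_set:
  assumes "P3 Upd" "P4 Upd" "algebra W F" "X \<subseteq> Delta W F" "B \<in> F" "N \<in> F"
    and null: "\<forall>P\<in>X. P N = 0"
  shows "Upd W F X B = Upd W F X (B - N)"
proof -
  interpret algebra W F by fact
  have "\<forall>P\<in>X. P (W - N) = 1"
  proof
    fix P assume "P \<in> X"
    then have "prob_measure_on W F P" using \<open>X \<subseteq> Delta W F\<close> by (auto simp: Delta_def)
    from prob_measure_on_compl[OF this \<open>N \<in> F\<close>] show "P (W - N) = 1"
      using null \<open>P \<in> X\<close> by simp
  qed
  then have "Upd W F X (W - N) = X"
    using assms(2-4) \<open>N \<in> F\<close> unfolding P4_def by blast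
  then have "Upd W F X B = Upd W F (Upd W F X (W - N)) B" by simp
  also have "\<dots> = Upd W F X ((W - N) \<inter> B)"
    using assms(1,3-6) unfolding P3_def by blast
  also have "(W - N) \<inter> B = B - N" using sets_into_space[OF \<open>B \<in> F\<close>] by blast
  finally show ?thesis .
qed

theorem lemma4p6:
  fixes Upd :: "'a upd_family" and W :: "'a set" and F :: "'a set set"
    and P :: "'a set \<Rightarrow> real" and A B :: "'a set"
  assumes "upd_family Upd" and "P1 Upd" and "P3 Upd" and "P4 Upd"
    and "algebra W F" and "P \<in> Delta W F"
    and "A \<in> F" and "B \<in> F" and "A \<subseteq> B"
  shows "(cond_prob P A B = 1 \<longrightarrow> (\<forall>P' \<in> Upd W F {P} B. P' A = 1)) \<and>
         (cond_prob P A B = 0 \<longrightarrow> (\<forall>P' \<in> Upd W F {P} B. P' A = 0))"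
proof -
  interpret algebra W F by fact
  have X: "{P} \<subseteq> Delta W F" using assms(6) by simp
  have BA: "B - A \<in> F" using assms(7,8) by blast
  have split_B: "P B = P A + P (B - A)"
    using prob_measure_on_Diff assms(6-9) by (simp add: Delta_def)
  have cond: "cond_prob P A B = P A / P B"
    using assms(9) by (simp add: cond_prob_def Int_absorb2)
  have certain: "\<forall>Q \<in> Upd W F {P} B. Q A = 1" if "cond_prob P A B = 1"
  proof -
    have "P (B - A) = 0" using that cond split_B by (auto split: if_splits)
    then have "Upd W F {P} B = Upd W F {P} A"
      using update_remove_null_set[OF assms(3,4,5) X assms(8) BA] assms(9)
      by (simp add: Diff_Diff_Int Int_absorb1)
    then show ?thesis using update_on_posterior_certain[OF assms(2,5) X assms(7)] by blast
  qed
  have null: "\<forall>Q \<in> Upd W F {P} B. Q A = 0" if "cond_prob P A B = 0"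
  proof (cases "P B = 0")
    case True
    then have "Upd W F {P} B = {}"
      using assms(1,5,8) X unfolding upd_family_def update_fun_def by simp
    then show ?thesis by simp
  next
    case False
    then have "P A = 0" using that cond by simp
    then have "Upd W F {P} B = Upd W F {P} (B - A)"
      using update_remove_null_set[OF assms(3,4,5) X assms(8,7)] by simp
    moreover have "(B - A) \<inter> A = {}" by blast
    ultimately show ?thesis
      using update_on_posterior_certain[OF assms(2,5) X BA]
        prob_measure_on_disjoint_certain[OF _ BA assms(7)] by auto
  qed
  show ?thesis using certain null by blast
qed

end
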